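(* In the setting of the context, let $k\ge1$, $a,b\ge0$ be integers with $a+b<k$. Then: (0) $\mathbf K_{k,a,b}(Z,Z')=\frac{n}{k-a-b}\big(\mathbf G_{k,a,b}(Z)-\mathbf G_{k,a,b}(Z')\big)$; (1) $\mathbf K_{k,a,b}(z',z)=-\mathbf K_{k,a,b}(z,z')$ identically; (2) $\mathbb E[\mathbf K_{k,a,b}(Z,Z')\mid Z]=\mathbf G_{k,a,b}(Z)$; (3) $(\mathbf D_1(Z)-\mathbf D_1(Z'))\mathbf K_{k,a,b}(Z,Z')=0$ and $\mathbf K_{k,a,b}(Z,Z')(\mathbf D_2(Z)-\mathbf D_2(Z'))=0$.
   Context: Let $Z=(Z_1,\dots,Z_n)$ be independent real random variables with finite moments of all orders; for $i\in[n]$, $\tilde Z_i$ is an independent copy of $Z_i$, $Z^{(i)}=(Z_1,\dots,Z_{i-1},\tilde Z_i,Z_{i+1},\dots,Z_n)$, and $Z'=Z^{(i)}$ for $i$ uniform in $[n]$ independent of everything else. Multi-index notation: for $\alpha,\beta\in\mathbb N^n$, sums and products are entrywise, $Z^\alpha=\prod_iZ_i^{\alpha_i}$, $|\alpha|_0$ is the number of nonzero entries, $|\alpha|_1=\sum_i\alpha_i$, $\alpha\le\beta$ is entrywise, $\alpha\unlhd\beta$ means $\alpha_i\in\{0,\beta_i\}$ for all $i$, and for $\gamma\in\{0,1\}^n$, $1-\gamma$ flips all bits. Polynomials are formal polynomials in $Z_1,\dots,Z_n$. $\nabla_\alpha(Z^\beta)=Z^{\beta-\alpha}$ if $\alpha\unlhd\beta$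 and $0$ otherwise (extended linearly, entrywise to matrices). For $\alpha\ne0$, $\chi_\alpha=\prod_{i:\alpha_i>0}(Z_i^{\alpha_i}-\mathbb E[Z_i^{\alpha_i}])$; every polynomial $f$ of degree $\le d_p$ is uniquely $c+\sum_{\alpha\ne0}\hat f(\alpha)\chi_\alpha$. Let $\mathcal I,\mathcal J$ be finite sets and $\mathbf F$ an $\mathcal I\times\mathcal J$ matrix with polynomial entries of total degree $\le d_p$; $\mathbf X=\mathbf F-\mathbb E\mathbf F=\sum_{\alpha\ne0}\hat{\mathbf X}(\alpha)\chi_\alpha$ and $\mathbf X_k=\sum_{|\alpha|_0=k}\hat{\mathbf X}(\alpha)\chi_\alpha$. $\mathcal K$ is the set of pairs $(\alpha,\gamma)$, $\alpha\in\mathbb N^n$, $|\alpha|_1\le d_p$, $\gamma\in\{0,1\}^n$, $\gamma\le\alpha$. $\mathbf D_1$ (resp. $\mathbf D_2$) is diagonal, indexed by $\mathcal I\times\mathcal K$ (resp. $\mathcal J\times\mathcal K$), with $(I,\alpha,\gamma)$ entry $\sqrt{\mathbb E[Z^{2\alpha\cdot(1-\gamma)}]}\,Z^{\alpha\cdot\gamma}$. $\mathbf G_{k,a,b}$ has rows $\mathcal I\times\mathcal K$, columns $\mathcal J\times\mathcal K$, and $[(I,\alpha_1,\gamma_1),(J,\alpha_2,\gamma_2)]$ entry $\nabla_{\alpha_1+\alpha_2}\mathbf X_k[I,J]$ if $|\alpha_1|_0=a,|\alpha_2|_0=b,\alpha_1\cdot\alpha_2=0$, and $0$ otherwise. For a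 mean-zero polynomial $f=\sum_{\alpha\ne0}\hat f(\alpha)\chi_\alpha$ put $\mathcal L^{-1}(f)=\sum_{\alpha\neq0}\frac{n}{|\alpha|_0}\hat f(\alpha)\chi_\alpha$ (applied entrywise), and for $a+b<k$ define the inner kernel $\mathbf K_{k,a,b}(z,z')=\mathcal L^{-1}(\mathbf G_{k,a,b})(z)-\mathcal L^{-1}(\mathbf G_{k,a,b})(z')$. *)

theory Defs
  imports "HOL-Probability.Probability" "HOL-Library.Poly_Mapping"
begin

text \<open>Multi-indices are finitely supported maps nat =>0 nat (coordinate i < n stands for Z_(i+1));
  formal polynomials are finitely supported maps from multi-indices to real coefficients.\<close>

type_synonym mindex = "nat \<Rightarrow>\<^sub>0 nat"
type_synonym mpoly = "mindex \<Rightarrow>\<^sub>0 real"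

definition mconst :: "real \<Rightarrow> mpoly" where
  "mconst c = Poly_Mapping.single 0 c"

definition mmonom :: "mindex \<Rightarrow> mpoly" where
  "mmonom \<beta> = Poly_Mapping.single \<beta> 1"

definition mdeg :: "mindex \<Rightarrow> nat" where
  "mdeg \<alpha> = (\<Sum>i\<in>Poly_Mapping.keys \<alpha>. Poly_Mapping.lookup \<alpha> i)"

definition msupp :: "mindex \<Rightarrow> nat" where
  "msupp \<alpha> = card (Poly_Mapping.keys \<alpha>)"

definition munlhd :: "mindex \<Rightarrow> mindex \<Rightarrow> bool" where
  "munlhd \<alpha> \<beta> \<longleftrightarrow> (\<forall>i. Poly_Mapping.lookup \<alpha> i = 0 \<or> Poly_Mapping.lookup \<alpha> i = Poly_Mapping.lookup \<beta> i)"

definition mpeval :: "mpoly \<Rightarrow> (nat \<Rightarrow> real) \<Rightarrow> real" where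
  "mpeval p z = (\<Sum>\<beta>\<in>Poly_Mapping.keys p. Poly_Mapping.lookup p \<beta> * (\<Prod>i\<in>Poly_Mapping.keys \<beta>. z i ^ Poly_Mapping.lookup \<beta> i))"

definition nabla :: "mindex \<Rightarrow> mpoly \<Rightarrow> mpoly" where
  "nabla \<alpha> p = (\<Sum>\<beta>\<in>Poly_Mapping.keys p. if munlhd \<alpha> \<beta> then Poly_Mapping.single (\<beta> - \<alpha>) (Poly_Mapping.lookup p \<beta>) else 0)"

definition MI :: "nat \<Rightarrow> nat \<Rightarrow> mindex set" where
  "MI n dp = {\<alpha>. \<alpha> \<noteq> 0 \<and> Poly_Mapping.keys \<alpha> \<subseteq> {..<n} \<and> mdeg \<alpha> \<le> dp}"

text \<open>mu i is the law of Z_(i+1); the joint law of Z is the product measure (independence).\<close>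
definition Zlaw :: "nat \<Rightarrow> (nat \<Rightarrow> real measure) \<Rightarrow> (nat \<Rightarrow> real) measure" where
  "Zlaw n \<mu> = PiM {..<n} \<mu>"

definition mom :: "(nat \<Rightarrow> real measure) \<Rightarrow> nat \<Rightarrow> nat \<Rightarrow> real" where
  "mom \<mu> i m = (\<integral>t. t ^ m \<partial>(\<mu> i))"

definition chi :: "(nat \<Rightarrow> real measure) \<Rightarrow> mindex \<Rightarrow> mpoly" where
  "chi \<mu> \<alpha> = (\<Prod>i\<in>Poly_Mapping.keys \<alpha>.
      mmonom (Poly_Mapping.single i (Poly_Mapping.lookup \<alpha> i)) - mconst (mom \<mu> i (Poly_Mapping.lookup \<alpha> i)))"

definition fhat :: "nat \<Rightarrow> nat \<Rightarrow> (nat \<Rightarrow> real measure) \<Rightarrow> mpoly \<Rightarrow> mindex \<Rightarrow> real" where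
  "fhat n dp \<mu> f = (THE h. (\<forall>\<alpha>. \<alpha> \<notin> MI n dp \<longrightarrow> h \<alpha> = 0) \<and>
      (\<exists>c. f = mconst c + (\<Sum>\<alpha>\<in>MI n dp. mconst (h \<alpha>) * chi \<mu> \<alpha>)))"

definition Linv :: "nat \<Rightarrow> nat \<Rightarrow> (nat \<Rightarrow> real measure) \<Rightarrow> mpoly \<Rightarrow> mpoly" where
  "Linv n dp \<mu> f = (\<Sum>\<alpha>\<in>MI n dp.
      mconst (real n / real (msupp \<alpha>) * fhat n dp \<mu> f \<alpha>) * chi \<mu> \<alpha>)"

definition Xmat :: "nat \<Rightarrow> (nat \<Rightarrow> real measure) \<Rightarrow> ('i \<Rightarrow> 'j \<Rightarrow> mpoly) \<Rightarrow> 'i \<Rightarrow> 'j \<Rightarrow> mpoly" where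
  "Xmat n \<mu> F I J = F I J - mconst (\<integral>z. mpeval (F I J) z \<partial>(Zlaw n \<mu>))"

definition Xk :: "nat \<Rightarrow> nat \<Rightarrow> (nat \<Rightarrow> real measure) \<Rightarrow> ('i \<Rightarrow> 'j \<Rightarrow> mpoly) \<Rightarrow> nat \<Rightarrow> 'i \<Rightarrow> 'j \<Rightarrow> mpoly" where
  "Xk n dp \<mu> F k I J = (\<Sum>\<alpha>\<in>{\<alpha>\<in>MI n dp. msupp \<alpha> = k}.
      mconst (fhat n dp \<mu> (Xmat n \<mu> F I J) \<alpha>) * chi \<mu> \<alpha>)"

definition Kset :: "nat \<Rightarrow> nat \<Rightarrow> (mindex \<times> mindex) set" where
  "Kset n dp = {(\<alpha>, \<gamma>). Poly_Mapping.keys \<alpha> \<subseteq> {..<n} \<and> mdeg \<alpha> \<le> dp \<and>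
      (\<forall>i. Poly_Mapping.lookup \<gamma> i \<le> 1) \<and> (\<forall>i. Poly_Mapping.lookup \<gamma> i \<le> Poly_Mapping.lookup \<alpha> i)}"

definition Ddiag :: "nat \<Rightarrow> (nat \<Rightarrow> real measure) \<Rightarrow> (nat \<Rightarrow> real) \<Rightarrow> 'i \<times> (mindex \<times> mindex) \<Rightarrow> real" where
  "Ddiag n \<mu> z r = (case r of (I, \<alpha>, \<gamma>) \<Rightarrow>
     sqrt (\<integral>w. (\<Prod>i<n. w i ^ (2 * Poly_Mapping.lookup \<alpha> i * (1 - Poly_Mapping.lookup \<gamma> i))) \<partial>(Zlaw n \<mu>))
       * (\<Prod>i<n. z i ^ (Poly_Mapping.lookup \<alpha> i * Poly_Mapping.lookup \<gamma> i)))"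

definition diagmat :: "('r \<Rightarrow> real) \<Rightarrow> 'r \<Rightarrow> 'r \<Rightarrow> real" where
  "diagmat d r s = (if r = s then d r else 0)"

definition mmult :: "'m set \<Rightarrow> ('r \<Rightarrow> 'm \<Rightarrow> real) \<Rightarrow> ('m \<Rightarrow> 'c \<Rightarrow> real) \<Rightarrow> 'r \<Rightarrow> 'c \<Rightarrow> real" where
  "mmult S A B r c = (\<Sum>m\<in>S. A r m * B m c)"

definition Gmat :: "nat \<Rightarrow> nat \<Rightarrow> (nat \<Rightarrow> real measure) \<Rightarrow> ('i \<Rightarrow> 'j \<Rightarrow> mpoly) \<Rightarrow> nat \<Rightarrow> nat \<Rightarrow> nat
    \<Rightarrow> 'i \<times> (mindex \<times> mindex) \<Rightarrow> 'j \<times> (mindex \<times> mindex) \<Rightarrow> mpoly" where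
  "Gmat n dp \<mu> F k a b r c = (case r of (I, \<alpha>1, \<gamma>1) \<Rightarrow> case c of (J, \<alpha>2, \<gamma>2) \<Rightarrow>
     if msupp \<alpha>1 = a \<and> msupp \<alpha>2 = b \<and> (\<forall>i. Poly_Mapping.lookup \<alpha>1 i * Poly_Mapping.lookup \<alpha>2 i = 0)
     then nabla (\<alpha>1 + \<alpha>2) (Xk n dp \<mu> F k I J) else 0)"

definition Gval where
  "Gval n dp \<mu> F k a b z r c = mpeval (Gmat n dp \<mu> F k a b r c) z"

definition Kker where
  "Kker n dp \<mu> F k a b z z' r c =
     mpeval (Linv n dp \<mu> (Gmat n dp \<mu> F k a b r c)) z - mpeval (Linv n dp \<mu> (Gmat n dp \<mu> F k a b r c)) z'"

end

(*
  Every entry of G_{k,a,b} at row (I, alpha1, gamma1) and column (J, alpha2, gamma2) is a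
  combination of basis polynomials chi_gamma with |gamma|_0 = k - a - b and gamma disjoint from
  alpha1 + alpha2, because nabla_{alpha1 + alpha2} maps chi_beta to chi_{beta - alpha1 - alpha2}.
  As the chi-expansion is unique, L^{-1} acts on such an entry as multiplication by n/(k - a - b),
  which gives (0); (1) holds because K is a difference. Each chi_gamma is centred in every
  variable of its support and does not depend on the others, so averaging over the resampled
  coordinate i and summing over i multiplies it by |gamma|_0; this gives (2). For (3), the D-entry
  at (alpha, gamma) depends only on the coordinates in the support of alpha, on which the G-entry
  does not depend at all. All four identities in fact hold for every z and t, not only almost
  surely.
*)

theory Submission
  imports Defs
begin

text \<open>Main uses the unqualified names for unrelated constants.\<close>

abbreviation lookup where "lookup \<equiv> Poly_Mapping.lookup"
abbreviation keys where "keys \<equiv> Poly_Mapping.keys"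
abbreviation single where "single \<equiv> Poly_Mapping.single"

definition monom_eval :: "mindex \<Rightarrow> (nat \<Rightarrow> real) \<Rightarrow> real" where
  "monom_eval \<beta> z = (\<Prod>i\<in>keys \<beta>. z i ^ lookup \<beta> i)"

lemma monom_eval_superset:
  "finite A \<Longrightarrow> keys \<beta> \<subseteq> A \<Longrightarrow> monom_eval \<beta> z = (\<Prod>i\<in>A. z i ^ lookup \<beta> i)"
  unfolding monom_eval_def by (rule prod.mono_neutral_left) (auto simp: in_keys_iff)

lemma monom_eval_zero [simp]: "monom_eval 0 z = 1"
  by (simp add: monom_eval_def)

lemma monom_eval_single [simp]: "monom_eval (single i e) z = z i ^ e"
  by (simp add: monom_eval_def)

lemma monom_eval_add: "monom_eval (\<beta> + \<gamma>) z = monom_eval \<beta> z * monom_eval \<gamma> z"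
proof -
  let ?A = "keys \<beta> \<union> keys \<gamma>"
  have "monom_eval (\<beta> + \<gamma>) z = (\<Prod>i\<in>?A. z i ^ lookup (\<beta> + \<gamma>) i)"
    by (rule monom_eval_superset) (use Poly_Mapping.keys_add[of \<beta> \<gamma>] in auto)
  also have "\<dots> = (\<Prod>i\<in>?A. z i ^ lookup \<beta> i) * (\<Prod>i\<in>?A. z i ^ lookup \<gamma> i)"
    by (simp add: lookup_add power_add prod.distrib)
  also have "\<dots> = monom_eval \<beta> z * monom_eval \<gamma> z"
    by (simp add: monom_eval_superset[of ?A])
  finally show ?thesis .
qed

lemma mpeval_eq_sum_monom_eval: "mpeval p z = (\<Sum>\<beta>\<in>keys p. lookup p \<beta> * monom_eval \<beta> z)"
  by (simp add: mpeval_def monom_eval_def)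

lemma mpeval_superset:
  "finite A \<Longrightarrow> keys p \<subseteq> A \<Longrightarrow> mpeval p z = (\<Sum>\<beta>\<in>A. lookup p \<beta> * monom_eval \<beta> z)"
  unfolding mpeval_eq_sum_monom_eval by (rule sum.mono_neutral_left) (auto simp: in_keys_iff)

lemma mpeval_zero [simp]: "mpeval 0 z = 0"
  by (simp add: mpeval_def)

lemma mpeval_single [simp]: "mpeval (single \<beta> c) z = c * monom_eval \<beta> z"
  by (simp add: mpeval_def monom_eval_def)

lemma mpeval_mconst [simp]: "mpeval (mconst c) z = c"
  by (simp add: mconst_def)

lemma mpeval_mmonom [simp]: "mpeval (mmonom \<beta>) z = monom_eval \<beta> z"
  by (simp add: mmonom_def)

lemma mpeval_add: "mpeval (p + q) z = mpeval p z + mpeval q z"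
proof -
  let ?A = "keys p \<union> keys q"
  have "mpeval (p + q) z = (\<Sum>\<beta>\<in>?A. lookup (p + q) \<beta> * monom_eval \<beta> z)"
    by (rule mpeval_superset) (use Poly_Mapping.keys_add[of p q] in auto)
  also have "\<dots> = mpeval p z + mpeval q z"
    by (simp add: lookup_add distrib_right sum.distrib mpeval_superset[of ?A])
  finally show ?thesis .
qed

lemma mpeval_uminus: "mpeval (- p) z = - mpeval p z"
  by (simp add: mpeval_def sum_negf)

lemma mpeval_diff: "mpeval (p - q) z = mpeval p z - mpeval q z"
  using mpeval_add[of p "- q" z] by (simp add: mpeval_uminus)

lemma mpeval_sum: "mpeval (\<Sum>j\<in>J. f j) z = (\<Sum>j\<in>J. mpeval (f j) z)"
  by (induction J rule: infinite_finite_induct) (auto simp: mpeval_add)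

lemma sum_single_lookup: "(\<Sum>\<gamma>\<in>keys p. single \<gamma> (lookup p \<gamma>)) = p"
  by (rule poly_mapping_eqI) (auto simp: lookup_sum lookup_single when_def in_keys_iff)

lemma mpeval_single_mult: "mpeval (single \<delta> c * q) z = c * monom_eval \<delta> z * mpeval q z"
proof -
  have expand: "single \<delta> c * q = (\<Sum>\<gamma>\<in>keys q. single (\<delta> + \<gamma>) (c * lookup q \<gamma>))"
    by (subst sum_single_lookup[of q, symmetric]) (simp add: sum_distrib_left mult_single)
  show ?thesis
    unfolding expand mpeval_sum mpeval_single
    by (simp add: monom_eval_add mpeval_eq_sum_monom_eval sum_distrib_left mult_ac)
qed

lemma mpeval_mult: "mpeval (p * q) z = mpeval p z * mpeval q z"
proof -
  have expand: "p * q = (\<Sum>\<gamma>\<in>keys p. single \<gamma> (lookup p \<gamma>) * q)"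
    by (subst sum_single_lookup[of p, symmetric]) (simp add: sum_distrib_right)
  show ?thesis
    unfolding expand mpeval_sum mpeval_single_mult
    by (simp add: mpeval_eq_sum_monom_eval[of p] sum_distrib_right)
qed

lemma mpeval_one [simp]: "mpeval 1 z = 1"
  using mpeval_mconst[of 1 z] by (simp add: mconst_def)

lemma mpeval_prod: "mpeval (\<Prod>j\<in>J. f j) z = (\<Prod>j\<in>J. mpeval (f j) z)"
  by (induction J rule: infinite_finite_induct) (auto simp: mpeval_mult)

lemma lookup_mconst_mult: "lookup (mconst c * p) \<gamma> = c * lookup p \<gamma>"
  by (simp add: mconst_def flip: mult_map_scale_conv_mult) (simp add: map.rep_eq when_def)

lemma mconst_zero [simp]: "mconst 0 = 0"
  by (simp add: mconst_def)

lemma mconst_mult: "mconst a * mconst b = mconst (a * b)"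
  by (simp add: mconst_def mult_single)

lemma lookup_mconst: "lookup (mconst c) \<alpha> = (if \<alpha> = 0 then c else 0)"
  by (simp add: mconst_def lookup_single when_def)

section \<open>The basis polynomials \<open>\<chi>\<^sub>\<alpha>\<close>\<close>

lemma mpeval_chi:
  "mpeval (chi \<mu> \<beta>) z = (\<Prod>i\<in>keys \<beta>. z i ^ lookup \<beta> i - mom \<mu> i (lookup \<beta> i))"
  by (simp add: chi_def mpeval_prod mpeval_diff)

lemma mpeval_chi_resample:
  "mpeval (chi \<mu> \<gamma>) (z(i := t)) =
    (if i \<in> keys \<gamma>
     then (t ^ lookup \<gamma> i - mom \<mu> i (lookup \<gamma> i)) *
       (\<Prod>l\<in>keys \<gamma> - {i}. z l ^ lookup \<gamma> l - mom \<mu> l (lookup \<gamma> l))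
     else mpeval (chi \<mu> \<gamma>) z)"
proof (cases "i \<in> keys \<gamma>")
  case True
  have "(\<Prod>l\<in>keys \<gamma> - {i}. (z(i := t)) l ^ lookup \<gamma> l - mom \<mu> l (lookup \<gamma> l)) =
      (\<Prod>l\<in>keys \<gamma> - {i}. z l ^ lookup \<gamma> l - mom \<mu> l (lookup \<gamma> l))"
    by (intro prod.cong) auto
  with True show ?thesis
    unfolding mpeval_chi by (simp add: prod.remove[OF finite_keys True])
next
  case False
  then show ?thesis
    unfolding mpeval_chi by (auto intro: prod.cong)
qed

lemma
  assumes "prob_space (\<mu> i)" and "\<And>e. integrable (\<mu> i) (\<lambda>t. t ^ e)"
  shows integrable_chi_resample: "integrable (\<mu> i) (\<lambda>t. mpeval (chi \<mu> \<gamma>) (z(i := t)))"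
    and integral_chi_resample:
      "(\<integral>t. mpeval (chi \<mu> \<gamma>) (z(i := t)) \<partial>\<mu> i) = (if i \<in> keys \<gamma> then 0 else mpeval (chi \<mu> \<gamma>) z)"
proof -
  interpret prob_space "\<mu> i" by fact
  show "integrable (\<mu> i) (\<lambda>t. mpeval (chi \<mu> \<gamma>) (z(i := t)))"
    using assms(2) by (cases "i \<in> keys \<gamma>") (simp_all add: mpeval_chi_resample)
  show "(\<integral>t. mpeval (chi \<mu> \<gamma>) (z(i := t)) \<partial>\<mu> i) = (if i \<in> keys \<gamma> then 0 else mpeval (chi \<mu> \<gamma>) z)"
    using assms(2) prob_space
    by (cases "i \<in> keys \<gamma>") (simp_all add: mpeval_chi_resample mom_def)
qed

text \<open>The generator identity \<open>L \<chi>\<^sub>\<gamma> = |\<gamma>|\<^sub>0 \<chi>\<^sub>\<gamma>\<close>, for combinations of \<open>\<chi>\<^sub>\<gamma>\<close> with \<open>|\<gamma>|\<^sub>0 = m\<close>.\<close>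

lemma sum_integral_resample_chi_sum:
  assumes \<Gamma>: "\<And>\<gamma>. \<gamma> \<in> \<Gamma> \<Longrightarrow> keys \<gamma> \<subseteq> {..<n}" "\<And>\<gamma>. \<gamma> \<in> \<Gamma> \<Longrightarrow> msupp \<gamma> = m"
    and prob: "\<And>i. i < n \<Longrightarrow> prob_space (\<mu> i)"
    and moments: "\<And>i e. i < n \<Longrightarrow> integrable (\<mu> i) (\<lambda>t. t ^ e)"
    and p: "\<And>w. p w = (\<Sum>\<gamma>\<in>\<Gamma>. x \<gamma> * mpeval (chi \<mu> \<gamma>) w)"
  shows "(\<Sum>i<n. \<integral>t. p z - p (z(i := t)) \<partial>\<mu> i) = real m * p z"
proof -
  have resample: "(\<integral>t. p z - p (z(i := t)) \<partial>\<mu> i) =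
      (\<Sum>\<gamma>\<in>\<Gamma>. x \<gamma> * (if i \<in> keys \<gamma> then mpeval (chi \<mu> \<gamma>) z else 0))" if "i < n" for i
  proof -
    interpret prob_space "\<mu> i" using prob[OF that] .
    show ?thesis
      using integrable_chi_resample[of \<mu> i, OF prob[OF that] moments[OF that]]
        integral_chi_resample[of \<mu> i, OF prob[OF that] moments[OF that]] prob_space
      by (simp add: p sum_subtractf[symmetric] right_diff_distrib[symmetric]) (auto intro!: sum.cong)
  qed
  have count: "(\<Sum>i<n. if i \<in> keys \<gamma> then v else 0) = real m * v" if "\<gamma> \<in> \<Gamma>" for \<gamma> and v :: real
  proof -
    from \<Gamma>(1)[OF that] have "(\<Sum>i<n. if i \<in> keys \<gamma> then v else 0) = (\<Sum>i\<in>keys \<gamma>. v)"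
      by (intro sum.mono_neutral_cong_right) auto
    also have "\<dots> = real m * v" using \<Gamma>(2)[OF that] by (simp add: msupp_def)
    finally show ?thesis .
  qed
  have "(\<Sum>i<n. \<integral>t. p z - p (z(i := t)) \<partial>\<mu> i) =
      (\<Sum>\<gamma>\<in>\<Gamma>. x \<gamma> * (\<Sum>i<n. if i \<in> keys \<gamma> then mpeval (chi \<mu> \<gamma>) z else 0))"
    by (simp add: resample sum_distrib_left sum.swap[of _ "{..<n}"])
  also have "\<dots> = real m * p z"
    by (simp add: count p sum_distrib_left mult_ac cong: sum.cong)
  finally show ?thesis .
qed

lemma prod_single: "(\<Prod>i\<in>S. single (k i) (c i)) = single (\<Sum>i\<in>S. k i) (\<Prod>i\<in>S. c i)"
  by (induction S rule: infinite_finite_induct) (auto simp: mult_single)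

lemma chi_expansion:
  "chi \<mu> \<beta> = (\<Sum>S\<in>Pow (keys \<beta>).
     single (\<Sum>i\<in>S. single i (lookup \<beta> i)) (\<Prod>i\<in>keys \<beta> - S. - mom \<mu> i (lookup \<beta> i)))"
proof -
  have "chi \<mu> \<beta> = (\<Prod>i\<in>keys \<beta>. single (single i (lookup \<beta> i)) 1 + single 0 (- mom \<mu> i (lookup \<beta> i)))"
    by (simp add: chi_def mmonom_def mconst_def single_uminus)
  also have "\<dots> = (\<Sum>S\<in>Pow (keys \<beta>). (\<Prod>i\<in>S. single (single i (lookup \<beta> i)) 1) *
      (\<Prod>i\<in>keys \<beta> - S. single 0 (- mom \<mu> i (lookup \<beta> i))))"
    by (simp add: prod_add)
  finally show ?thesis
    by (simp add: prod_single mult_single)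
qed

lemma sum_single_lookup_eq_iff:
  assumes "S \<subseteq> keys \<beta>"
  shows "(\<Sum>i\<in>S. single i (lookup \<beta> i)) = \<gamma> \<longleftrightarrow> S = keys \<gamma> \<and> munlhd \<gamma> \<beta>"
proof -
  let ?\<rho> = "\<Sum>i\<in>S. single i (lookup \<beta> i)"
  have "finite S" using assms finite_subset finite_keys by blast
  then have lookup_\<rho>: "lookup ?\<rho> j = (if j \<in> S then lookup \<beta> j else 0)" for j
    by (simp add: lookup_sum lookup_single when_def)
  show ?thesis
  proof
    assume "?\<rho> = \<gamma>"
    then have lookup_\<gamma>: "lookup \<gamma> j = (if j \<in> S then lookup \<beta> j else 0)" for j
      using lookup_\<rho>[of j] by simp
    show "S = keys \<gamma> \<and> munlhd \<gamma> \<beta>"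
      using assms by (auto simp: in_keys_iff munlhd_def lookup_\<gamma> split: if_splits)
  next
    assume \<gamma>: "S = keys \<gamma> \<and> munlhd \<gamma> \<beta>"
    show "?\<rho> = \<gamma>"
    proof (rule poly_mapping_eqI)
      fix j show "lookup ?\<rho> j = lookup \<gamma> j"
        unfolding lookup_\<rho> using \<gamma> by (metis in_keys_iff munlhd_def)
    qed
  qed
qed

lemma keys_subset_of_munlhd: "munlhd \<gamma> \<beta> \<Longrightarrow> keys \<gamma> \<subseteq> keys \<beta>"
  by (auto simp: munlhd_def in_keys_iff)

lemma lookup_chi:
  "lookup (chi \<mu> \<beta>) \<gamma> =
    (if munlhd \<gamma> \<beta> then (\<Prod>i\<in>keys \<beta> - keys \<gamma>. - mom \<mu> i (lookup \<beta> i)) else 0)"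
proof -
  have "lookup (chi \<mu> \<beta>) \<gamma> = (\<Sum>S\<in>Pow (keys \<beta>).
      if S = keys \<gamma> \<and> munlhd \<gamma> \<beta> then (\<Prod>i\<in>keys \<beta> - S. - mom \<mu> i (lookup \<beta> i)) else 0)"
    unfolding chi_expansion lookup_sum
    by (intro sum.cong refl) (auto simp: lookup_single when_def sum_single_lookup_eq_iff)
  then show ?thesis
    by (auto dest: keys_subset_of_munlhd)
qed

section \<open>The operator \<open>\<nabla>\<^sub>\<alpha>\<close>\<close>

lemma keys_disjoint_iff: "keys \<alpha> \<inter> keys \<gamma> = {} \<longleftrightarrow> (\<forall>i. lookup \<alpha> i = 0 \<or> lookup \<gamma> i = 0)"
  by (auto simp: in_keys_iff)

lemma munlhd_diff_eq_iff:
  "munlhd \<alpha> \<beta> \<and> \<beta> - \<alpha> = \<gamma> \<longleftrightarrow> \<beta> = \<gamma> + \<alpha> \<and> keys \<alpha> \<inter> keys \<gamma> = {}"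
proof
  assume h: "munlhd \<alpha> \<beta> \<and> \<beta> - \<alpha> = \<gamma>"
  then have \<gamma>: "lookup \<gamma> i = lookup \<beta> i - lookup \<alpha> i" for i
    by (auto simp: lookup_minus)
  have \<alpha>: "lookup \<alpha> i = 0 \<or> lookup \<alpha> i = lookup \<beta> i" for i
    using h by (auto simp: munlhd_def)
  have "\<beta> = \<gamma> + \<alpha>"
  proof (rule poly_mapping_eqI)
    fix i show "lookup \<beta> i = lookup (\<gamma> + \<alpha>) i"
      using \<alpha>[of i] \<gamma>[of i] by (auto simp: lookup_add)
  qed
  moreover have "keys \<alpha> \<inter> keys \<gamma> = {}"
    unfolding keys_disjoint_iff using \<alpha> \<gamma> by (metis diff_self_eq_0)
  ultimately show "\<beta> = \<gamma> + \<alpha> \<and> keys \<alpha> \<inter> keys \<gamma> = {}" ..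
next
  assume "\<beta> = \<gamma> + \<alpha> \<and> keys \<alpha> \<inter> keys \<gamma> = {}"
  then show "munlhd \<alpha> \<beta> \<and> \<beta> - \<alpha> = \<gamma>"
    by (auto simp: munlhd_def lookup_add keys_disjoint_iff)
qed

lemma lookup_nabla:
  "lookup (nabla \<alpha> p) \<gamma> = (if keys \<alpha> \<inter> keys \<gamma> = {} then lookup p (\<gamma> + \<alpha>) else 0)"
proof -
  have "lookup (nabla \<alpha> p) \<gamma> = (\<Sum>\<beta>\<in>keys p. if munlhd \<alpha> \<beta> \<and> \<beta> - \<alpha> = \<gamma> then lookup p \<beta> else 0)"
    by (auto simp: nabla_def lookup_sum lookup_single when_def if_distrib[of "\<lambda>x. lookup x \<gamma>"]
        intro!: sum.cong)
  also have "\<dots> = (\<Sum>\<beta>\<in>keys p. if \<beta> = \<gamma> + \<alpha> \<and> keys \<alpha> \<inter> keys \<gamma> = {} then lookup p \<beta> else 0)"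
    by (simp only: munlhd_diff_eq_iff)
  also have "\<dots> = (if keys \<alpha> \<inter> keys \<gamma> = {} then lookup p (\<gamma> + \<alpha>) else 0)"
    by (auto simp: in_keys_iff)
  finally show ?thesis .
qed

lemma nabla_sum: "nabla \<alpha> (\<Sum>j\<in>J. f j) = (\<Sum>j\<in>J. nabla \<alpha> (f j))"
  by (rule poly_mapping_eqI) (auto simp: lookup_nabla lookup_sum)

lemma nabla_mconst_mult: "nabla \<alpha> (mconst c * p) = mconst c * nabla \<alpha> p"
  by (rule poly_mapping_eqI) (auto simp: lookup_nabla lookup_mconst_mult)

lemma nabla_chi: "nabla \<alpha> (chi \<mu> \<beta>) = (if munlhd \<alpha> \<beta> then chi \<mu> (\<beta> - \<alpha>) else 0)"
proof (rule poly_mapping_eqI)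
  fix \<gamma>
  have pointwise: "((a = 0 \<or> g = 0) \<and> (g + a = 0 \<or> g + a = b)) \<longleftrightarrow> ((a = 0 \<or> a = b) \<and> (g = 0 \<or> g = b - a))"
    for a g b :: nat by arith
  have iff: "keys \<alpha> \<inter> keys \<gamma> = {} \<and> munlhd (\<gamma> + \<alpha>) \<beta> \<longleftrightarrow> munlhd \<alpha> \<beta> \<and> munlhd \<gamma> (\<beta> - \<alpha>)"
    by (simp only: keys_disjoint_iff munlhd_def lookup_add lookup_minus
        all_conj_distrib[symmetric] pointwise)
  have keys_eq: "keys \<beta> - keys (\<gamma> + \<alpha>) = keys (\<beta> - \<alpha>) - keys \<gamma>" if "munlhd \<alpha> \<beta>"
  proof (rule set_eqI)
    fix i
    have "lookup \<alpha> i = 0 \<or> lookup \<alpha> i = lookup \<beta> i" using that by (simp add: munlhd_def)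
    then show "i \<in> keys \<beta> - keys (\<gamma> + \<alpha>) \<longleftrightarrow> i \<in> keys (\<beta> - \<alpha>) - keys \<gamma>"
      by (auto simp: in_keys_iff lookup_add lookup_minus)
  qed
  have lookup_eq: "lookup (\<beta> - \<alpha>) i = lookup \<beta> i" if "munlhd \<alpha> \<beta>" "i \<in> keys (\<beta> - \<alpha>)" for i
  proof -
    have "lookup \<alpha> i = 0 \<or> lookup \<alpha> i = lookup \<beta> i" using that(1) by (simp add: munlhd_def)
    then show ?thesis using that(2) by (auto simp: in_keys_iff lookup_minus)
  qed
  show "lookup (nabla \<alpha> (chi \<mu> \<beta>)) \<gamma> = lookup (if munlhd \<alpha> \<beta> then chi \<mu> (\<beta> - \<alpha>) else 0) \<gamma>"
  proof (cases "munlhd \<alpha> \<beta>")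
    case True
    have "lookup (nabla \<alpha> (chi \<mu> \<beta>)) \<gamma> = (if munlhd \<gamma> (\<beta> - \<alpha>)
        then \<Prod>i\<in>keys \<beta> - keys (\<gamma> + \<alpha>). - mom \<mu> i (lookup \<beta> i) else 0)"
      by (simp only: lookup_nabla lookup_chi if_if_eq_conj iff True simp_thms)
    also have "\<dots> = lookup (chi \<mu> (\<beta> - \<alpha>)) \<gamma>"
      unfolding lookup_chi keys_eq[OF True] using lookup_eq[OF True] by (auto intro!: prod.cong)
    finally show ?thesis using True by simp
  next
    case False
    then show ?thesis using iff by (simp add: lookup_nabla lookup_chi)
  qed
qed

section \<open>Uniqueness of the \<open>\<chi>\<close>-expansion\<close>

lemma lookup_le_mdeg: "lookup \<alpha> i \<le> mdeg \<alpha>"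
proof (cases "i \<in> keys \<alpha>")
  case True
  then show ?thesis unfolding mdeg_def by (intro member_le_sum) auto
qed (simp add: in_keys_iff)

lemma finite_MI: "finite (MI n dp)"
proof -
  let ?f = "\<lambda>\<alpha>::mindex. restrict (lookup \<alpha>) {..<n}"
  have "inj_on ?f (MI n dp)"
  proof (rule inj_onI)
    fix \<alpha> \<beta> assume \<alpha>: "\<alpha> \<in> MI n dp" and \<beta>: "\<beta> \<in> MI n dp" and eq: "?f \<alpha> = ?f \<beta>"
    show "\<alpha> = \<beta>"
    proof (rule poly_mapping_eqI)
      fix i show "lookup \<alpha> i = lookup \<beta> i"
      proof (cases "i < n")
        case True
        then show ?thesis using fun_cong[OF eq, of i] by simp
      next
        case False
        then have "i \<notin> keys \<alpha>" "i \<notin> keys \<beta>" using \<alpha> \<beta> by (auto simp: MI_def)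
        then show ?thesis by (simp add: in_keys_iff)
      qed
    qed
  qed
  moreover have "?f ` MI n dp \<subseteq> PiE {..<n} (\<lambda>_. {..dp})"
    unfolding MI_def by (auto intro: order_trans[OF lookup_le_mdeg] split: if_splits)
  then have "finite (?f ` MI n dp)" by (rule finite_subset) (intro finite_PiE; simp)
  ultimately show ?thesis using finite_imageD by blast
qed

lemma mdeg_less_of_munlhd:
  assumes "munlhd \<alpha> \<beta>" and "\<alpha> \<noteq> \<beta>"
  shows "mdeg \<alpha> < mdeg \<beta>"
proof -
  have sub: "keys \<alpha> \<subseteq> keys \<beta>"
    using assms(1) by (rule keys_subset_of_munlhd)
  have eq: "lookup \<alpha> i = lookup \<beta> i" if "i \<in> keys \<alpha>" for i
    using assms(1) that unfolding munlhd_def by (metis in_keys_iff)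
  have "keys \<alpha> \<noteq> keys \<beta>"
  proof
    assume "keys \<alpha> = keys \<beta>"
    then have "\<alpha> = \<beta>"
      by (intro poly_mapping_eqI) (metis eq in_keys_iff)
    with assms(2) show False ..
  qed
  then obtain j where j: "j \<in> keys \<beta> - keys \<alpha>" using sub by blast
  have "mdeg \<beta> = (\<Sum>i\<in>keys \<beta> - keys \<alpha>. lookup \<beta> i) + mdeg \<alpha>"
    unfolding mdeg_def using sub eq by (simp add: sum.subset_diff)
  moreover have "(\<Sum>i\<in>keys \<beta> - keys \<alpha>. lookup \<beta> i) > 0"
    using j by (intro sum_pos2[of _ j]) (auto simp: in_keys_iff)
  ultimately show ?thesis by simp
qed

text \<open>Triangularity: \<open>\<chi>\<^sub>\<alpha>\<close> has coefficient 1 at \<open>Z\<^sup>\<alpha>\<close> and otherwise only lower-degree monomials.\<close>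

lemma chi_linear_independent:
  assumes "finite M" and "0 \<notin> M"
    and eq: "mconst c + (\<Sum>\<alpha>\<in>M. mconst (d \<alpha>) * chi \<mu> \<alpha>) = 0"
  shows "\<forall>\<alpha>\<in>M. d \<alpha> = 0"
proof (rule ccontr)
  let ?S = "{\<alpha>\<in>M. d \<alpha> \<noteq> 0}"
  assume "\<not> (\<forall>\<alpha>\<in>M. d \<alpha> = 0)"
  then have "mdeg ` ?S \<noteq> {}" by auto
  moreover have fin: "finite ?S" using assms(1) by simp
  ultimately have "Max (mdeg ` ?S) \<in> mdeg ` ?S" by (intro Max_in) auto
  then obtain \<alpha> where \<alpha>: "\<alpha> \<in> M" "d \<alpha> \<noteq> 0" and deg: "mdeg \<alpha> = Max (mdeg ` ?S)"
    by auto
  have max: "mdeg \<beta> \<le> mdeg \<alpha>" if "\<beta> \<in> ?S" for \<beta>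
    unfolding deg using fin that by (auto intro: Max_ge)
  have "lookup (mconst c + (\<Sum>\<beta>\<in>M. mconst (d \<beta>) * chi \<mu> \<beta>)) \<alpha> = (\<Sum>\<beta>\<in>M. d \<beta> * lookup (chi \<mu> \<beta>) \<alpha>)"
    using \<alpha>(1) assms(2) by (auto simp: lookup_add lookup_sum lookup_mconst_mult lookup_mconst)
  also have "\<dots> = (\<Sum>\<beta>\<in>M. if \<beta> = \<alpha> then d \<alpha> else 0)"
  proof (rule sum.cong)
    fix \<beta> assume "\<beta> \<in> M"
    have vanish: "lookup (chi \<mu> \<beta>) \<alpha> = 0" if "\<beta> \<noteq> \<alpha>" "d \<beta> \<noteq> 0"
      using mdeg_less_of_munlhd[of \<alpha> \<beta>] max[of \<beta>] \<open>\<beta> \<in> M\<close> that by (auto simp: lookup_chi)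
    show "d \<beta> * lookup (chi \<mu> \<beta>) \<alpha> = (if \<beta> = \<alpha> then d \<alpha> else 0)"
    proof (cases "\<beta> = \<alpha>")
      case True
      then show ?thesis by (simp add: lookup_chi munlhd_def)
    next
      case False
      then show ?thesis using vanish by (cases "d \<beta> = 0") simp_all
    qed
  qed simp
  also have "\<dots> = d \<alpha>" using \<alpha>(1) assms(1) by simp
  finally show False using eq \<alpha>(2) by simp
qed

lemma chi_sum_eq_MI_sum:
  assumes "\<Gamma> \<subseteq> MI n dp"
  shows "(\<Sum>\<gamma>\<in>\<Gamma>. mconst (x \<gamma>) * chi \<mu> \<gamma>) =
    (\<Sum>\<alpha>\<in>MI n dp. mconst (if \<alpha> \<in> \<Gamma> then x \<alpha> else 0) * chi \<mu> \<alpha>)"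
  by (rule sum.mono_neutral_cong_left) (use assms finite_MI in auto)

lemma fhat_chi_sum:
  assumes "\<Gamma> \<subseteq> MI n dp"
  shows "fhat n dp \<mu> (\<Sum>\<gamma>\<in>\<Gamma>. mconst (x \<gamma>) * chi \<mu> \<gamma>) = (\<lambda>\<alpha>. if \<alpha> \<in> \<Gamma> then x \<alpha> else 0)"
    (is "fhat n dp \<mu> ?f = ?h")
  unfolding fhat_def
proof (rule the_equality)
  have "?f = mconst 0 + (\<Sum>\<alpha>\<in>MI n dp. mconst (?h \<alpha>) * chi \<mu> \<alpha>)"
    using chi_sum_eq_MI_sum[OF assms] by simp
  moreover have "\<forall>\<alpha>. \<alpha> \<notin> MI n dp \<longrightarrow> ?h \<alpha> = 0"
    using assms by auto
  ultimately show "(\<forall>\<alpha>. \<alpha> \<notin> MI n dp \<longrightarrow> ?h \<alpha> = 0) \<and> (\<exists>c. ?f = mconst c + (\<Sum>\<alpha>\<in>MI n dp. mconst (?h \<alpha>) * chi \<mu> \<alpha>))"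
    by blast
next
  fix h
  assume h: "(\<forall>\<alpha>. \<alpha> \<notin> MI n dp \<longrightarrow> h \<alpha> = 0) \<and> (\<exists>c. ?f = mconst c + (\<Sum>\<alpha>\<in>MI n dp. mconst (h \<alpha>) * chi \<mu> \<alpha>))"
  then obtain c where c: "?f = mconst c + (\<Sum>\<alpha>\<in>MI n dp. mconst (h \<alpha>) * chi \<mu> \<alpha>)" by blast
  have "mconst c + (\<Sum>\<alpha>\<in>MI n dp. mconst (h \<alpha> - ?h \<alpha>) * chi \<mu> \<alpha>) =
      (mconst c + (\<Sum>\<alpha>\<in>MI n dp. mconst (h \<alpha>) * chi \<mu> \<alpha>)) - (\<Sum>\<alpha>\<in>MI n dp. mconst (?h \<alpha>) * chi \<mu> \<alpha>)"
    by (simp add: mconst_def single_diff left_diff_distrib sum_subtractf)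
  also have "\<dots> = 0"
    using c chi_sum_eq_MI_sum[OF assms] by simp
  finally have on_MI: "\<forall>\<alpha>\<in>MI n dp. h \<alpha> - ?h \<alpha> = 0"
    by (intro chi_linear_independent[OF finite_MI]) (auto simp: MI_def)
  show "h = ?h"
  proof
    fix \<alpha>
    show "h \<alpha> = ?h \<alpha>"
      using on_MI h assms by (cases "\<alpha> \<in> MI n dp") auto
  qed
qed

lemma Linv_chi_sum:
  assumes "\<Gamma> \<subseteq> MI n dp" and "\<And>\<gamma>. \<gamma> \<in> \<Gamma> \<Longrightarrow> msupp \<gamma> = m"
  shows "Linv n dp \<mu> (\<Sum>\<gamma>\<in>\<Gamma>. mconst (x \<gamma>) * chi \<mu> \<gamma>) =
    mconst (real n / real m) * (\<Sum>\<gamma>\<in>\<Gamma>. mconst (x \<gamma>) * chi \<mu> \<gamma>)"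
proof -
  have "Linv n dp \<mu> (\<Sum>\<gamma>\<in>\<Gamma>. mconst (x \<gamma>) * chi \<mu> \<gamma>) =
      (\<Sum>\<alpha>\<in>MI n dp. mconst (real n / real (msupp \<alpha>) * (if \<alpha> \<in> \<Gamma> then x \<alpha> else 0)) * chi \<mu> \<alpha>)"
    by (simp add: Linv_def fhat_chi_sum[OF assms(1)])
  also have "\<dots> = (\<Sum>\<gamma>\<in>\<Gamma>. mconst (real n / real m) * (mconst (x \<gamma>) * chi \<mu> \<gamma>))"
    by (rule sum.mono_neutral_cong_right)
      (use assms finite_MI in \<open>auto simp: mconst_mult mult.assoc\<close>)
  finally show ?thesis
    by (simp add: sum_distrib_left)
qed

section \<open>The entries of \<open>G\<^sub>k\<^sub>,\<^sub>a\<^sub>,\<^sub>b\<close>\<close>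

lemma keys_add_mindex: "keys (\<alpha> + \<beta>) = keys \<alpha> \<union> keys (\<beta> :: mindex)"
  by (auto simp: in_keys_iff lookup_add)

lemma keys_diff_of_munlhd: "munlhd \<delta> \<beta> \<Longrightarrow> keys (\<beta> - \<delta>) = keys \<beta> - keys \<delta>"
  unfolding munlhd_def by (auto simp: in_keys_iff lookup_minus)

lemma keys_diff_subset: "keys (\<beta> - \<delta>) \<subseteq> keys (\<beta> :: mindex)"
  by (auto simp: in_keys_iff lookup_minus)

lemma mdeg_diff_le: "mdeg (\<beta> - \<delta>) \<le> mdeg \<beta>"
proof -
  have "mdeg (\<beta> - \<delta>) \<le> (\<Sum>i\<in>keys (\<beta> - \<delta>). lookup \<beta> i)"
    unfolding mdeg_def by (intro sum_mono) (simp add: lookup_minus)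
  also have "\<dots> \<le> mdeg \<beta>"
    unfolding mdeg_def by (intro sum_mono2 keys_diff_subset) auto
  finally show ?thesis .
qed

lemma Gmat_chi_expansion:
  assumes "a + b < k"
  obtains \<Gamma> x where "\<Gamma> \<subseteq> MI n dp"
    and "\<And>\<gamma>. \<gamma> \<in> \<Gamma> \<Longrightarrow> msupp \<gamma> = k - a - b"
    and "\<And>\<gamma>. \<gamma> \<in> \<Gamma> \<Longrightarrow> keys \<gamma> \<inter> (keys \<alpha>1 \<union> keys \<alpha>2) = {}"
    and "Gmat n dp \<mu> F k a b (I, \<alpha>1, \<gamma>1) (J, \<alpha>2, \<gamma>2) = (\<Sum>\<gamma>\<in>\<Gamma>. mconst (x \<gamma>) * chi \<mu> \<gamma>)"
proof (cases "msupp \<alpha>1 = a \<and> msupp \<alpha>2 = b \<and> (\<forall>i. lookup \<alpha>1 i * lookup \<alpha>2 i = 0)")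
  case True
  define \<delta> where "\<delta> = \<alpha>1 + \<alpha>2"
  define B where "B = {\<beta>\<in>MI n dp. msupp \<beta> = k \<and> munlhd \<delta> \<beta>}"
  define c where "c = fhat n dp \<mu> (Xmat n \<mu> F I J)"
  have keys_\<delta>: "keys \<delta> = keys \<alpha>1 \<union> keys \<alpha>2"
    by (simp add: \<delta>_def keys_add_mindex)
  have card_\<delta>: "card (keys \<delta>) = a + b"
    using True unfolding keys_\<delta> msupp_def
    by (subst card_Un_disjoint) (auto simp: in_keys_iff)
  have "Gmat n dp \<mu> F k a b (I, \<alpha>1, \<gamma>1) (J, \<alpha>2, \<gamma>2) =
      (\<Sum>\<beta>\<in>{\<beta>\<in>MI n dp. msupp \<beta> = k}. if munlhd \<delta> \<beta> then mconst (c \<beta>) * chi \<mu> (\<beta> - \<delta>) else 0)"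
    unfolding c_def \<delta>_def using True
    by (auto simp: Gmat_def Xk_def nabla_sum nabla_mconst_mult nabla_chi intro!: sum.cong)
  also have "\<dots> = (\<Sum>\<beta>\<in>B. mconst (c \<beta>) * chi \<mu> (\<beta> - \<delta>))"
    unfolding B_def using finite_MI by (simp add: sum.inter_filter[symmetric])
  also have "\<dots> = (\<Sum>\<gamma>\<in>(\<lambda>\<beta>. \<beta> - \<delta>) ` B. mconst (c (\<gamma> + \<delta>)) * chi \<mu> \<gamma>)"
  proof -
    have add_back: "\<beta> - \<delta> + \<delta> = \<beta>" if "\<beta> \<in> B" for \<beta>
      using that munlhd_diff_eq_iff[of \<delta> \<beta> "\<beta> - \<delta>"] by (simp add: B_def)
    have "inj_on (\<lambda>\<beta>. \<beta> - \<delta>) B"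
    proof (rule inj_onI)
      fix \<beta> \<beta>' assume "\<beta> \<in> B" "\<beta>' \<in> B" "\<beta> - \<delta> = \<beta>' - \<delta>"
      then show "\<beta> = \<beta>'" using add_back by metis
    qed
    then show ?thesis
      by (simp add: sum.reindex add_back cong: sum.cong)
  qed
  finally have G_eq: "Gmat n dp \<mu> F k a b (I, \<alpha>1, \<gamma>1) (J, \<alpha>2, \<gamma>2) =
      (\<Sum>\<gamma>\<in>(\<lambda>\<beta>. \<beta> - \<delta>) ` B. mconst (c (\<gamma> + \<delta>)) * chi \<mu> \<gamma>)" .
  show ?thesis
  proof (rule that[OF _ _ _ G_eq]; clarify)
    fix \<beta> assume "\<beta> \<in> B"
    then have \<beta>: "\<beta> \<in> MI n dp" "msupp \<beta> = k" "munlhd \<delta> \<beta>"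
      by (auto simp: B_def)
    have keys: "keys (\<beta> - \<delta>) = keys \<beta> - keys \<delta>"
      using \<beta>(3) by (rule keys_diff_of_munlhd)
    show supp: "msupp (\<beta> - \<delta>) = k - a - b"
      using \<beta>(2,3) card_\<delta> keys_subset_of_munlhd[of \<delta> \<beta>]
      by (simp add: msupp_def keys card_Diff_subset)
    then have "\<beta> - \<delta> \<noteq> 0"
      using assms by (auto simp: msupp_def)
    then show "\<beta> - \<delta> \<in> MI n dp"
      using \<beta>(1) keys_diff_subset[of \<beta> \<delta>] mdeg_diff_le[of \<beta> \<delta>] by (auto simp: MI_def)
    show "keys (\<beta> - \<delta>) \<inter> (keys \<alpha>1 \<union> keys \<alpha>2) = {}"
      by (auto simp: keys keys_\<delta>)
  qed
next
  case False
  then have "Gmat n dp \<mu> F k a b (I, \<alpha>1, \<gamma>1) (J, \<alpha>2, \<gamma>2) = 0"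
    by (simp only: Gmat_def prod.case if_not_P if_False)
  then show ?thesis
    by (intro that[of "{}" "\<lambda>_. 0"]) simp_all
qed

lemma Kker_eq:
  assumes "a + b < k"
  shows "Kker n dp \<mu> F k a b z z' r c =
    real n / real (k - a - b) * (Gval n dp \<mu> F k a b z r c - Gval n dp \<mu> F k a b z' r c)"
proof -
  obtain I \<alpha>1 \<gamma>1 J \<alpha>2 \<gamma>2 where rc: "r = (I, \<alpha>1, \<gamma>1)" "c = (J, \<alpha>2, \<gamma>2)"
    by (cases r, cases c) auto
  obtain \<Gamma> x where \<Gamma>: "\<Gamma> \<subseteq> MI n dp" "\<And>\<gamma>. \<gamma> \<in> \<Gamma> \<Longrightarrow> msupp \<gamma> = k - a - b"
      "\<And>\<gamma>. \<gamma> \<in> \<Gamma> \<Longrightarrow> keys \<gamma> \<inter> (keys \<alpha>1 \<union> keys \<alpha>2) = {}"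
    and G: "Gmat n dp \<mu> F k a b r c = (\<Sum>\<gamma>\<in>\<Gamma>. mconst (x \<gamma>) * chi \<mu> \<gamma>)"
    unfolding rc by (rule Gmat_chi_expansion[OF assms]) blast
  show ?thesis
    by (simp add: Kker_def Gval_def G Linv_chi_sum[OF \<Gamma>(1,2)] mpeval_mult right_diff_distrib)
qed

lemma Kker_swap: "Kker n dp \<mu> F k a b z' z r c = - Kker n dp \<mu> F k a b z z' r c"
  by (simp add: Kker_def)

lemma Kker_resample_average:
  assumes "0 < n" and prob: "\<And>i. i < n \<Longrightarrow> prob_space (\<mu> i)"
    and moments: "\<And>i e. i < n \<Longrightarrow> integrable (\<mu> i) (\<lambda>t. t ^ e)"
    and abk: "a + b < k"
  shows "1 / real n * (\<Sum>i<n. \<integral>t. Kker n dp \<mu> F k a b z (z(i := t)) r c \<partial>\<mu> i) =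
    Gval n dp \<mu> F k a b z r c"
proof -
  obtain I \<alpha>1 \<gamma>1 J \<alpha>2 \<gamma>2 where rc: "r = (I, \<alpha>1, \<gamma>1)" "c = (J, \<alpha>2, \<gamma>2)"
    by (cases r, cases c) auto
  obtain \<Gamma> x where \<Gamma>: "\<Gamma> \<subseteq> MI n dp" "\<And>\<gamma>. \<gamma> \<in> \<Gamma> \<Longrightarrow> msupp \<gamma> = k - a - b"
      "\<And>\<gamma>. \<gamma> \<in> \<Gamma> \<Longrightarrow> keys \<gamma> \<inter> (keys \<alpha>1 \<union> keys \<alpha>2) = {}"
    and G: "Gmat n dp \<mu> F k a b r c = (\<Sum>\<gamma>\<in>\<Gamma>. mconst (x \<gamma>) * chi \<mu> \<gamma>)"
    unfolding rc by (rule Gmat_chi_expansion[OF abk]) blast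
  let ?G = "\<lambda>w. Gval n dp \<mu> F k a b w r c"
  have G_eval: "?G w = (\<Sum>\<gamma>\<in>\<Gamma>. x \<gamma> * mpeval (chi \<mu> \<gamma>) w)" for w
    by (simp add: Gval_def G mpeval_sum mpeval_mult)
  have keys: "keys \<gamma> \<subseteq> {..<n}" if "\<gamma> \<in> \<Gamma>" for \<gamma>
    using \<Gamma>(1) that by (auto simp: MI_def)
  have "(\<Sum>i<n. \<integral>t. Kker n dp \<mu> F k a b z (z(i := t)) r c \<partial>\<mu> i) =
      real n / real (k - a - b) * (\<Sum>i<n. \<integral>t. ?G z - ?G (z(i := t)) \<partial>\<mu> i)"
    by (simp add: Kker_eq[OF abk] sum_distrib_left)
  also have "\<dots> = real n * ?G z"
    using sum_integral_resample_chi_sum[OF keys \<Gamma>(2) prob moments G_eval] abk by simp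
  finally show ?thesis
    using assms(1) by simp
qed

lemma Gval_resample_invariant:
  assumes "a + b < k" and "i \<in> keys \<alpha>1 \<union> keys \<alpha>2"
  shows "Gval n dp \<mu> F k a b (z(i := t)) (I, \<alpha>1, \<gamma>1) (J, \<alpha>2, \<gamma>2) =
    Gval n dp \<mu> F k a b z (I, \<alpha>1, \<gamma>1) (J, \<alpha>2, \<gamma>2)"
proof -
  obtain \<Gamma> x where \<Gamma>: "\<Gamma> \<subseteq> MI n dp" "\<And>\<gamma>. \<gamma> \<in> \<Gamma> \<Longrightarrow> msupp \<gamma> = k - a - b"
      "\<And>\<gamma>. \<gamma> \<in> \<Gamma> \<Longrightarrow> keys \<gamma> \<inter> (keys \<alpha>1 \<union> keys \<alpha>2) = {}"
    and G: "Gmat n dp \<mu> F k a b (I, \<alpha>1, \<gamma>1) (J, \<alpha>2, \<gamma>2) = (\<Sum>\<gamma>\<in>\<Gamma>. mconst (x \<gamma>) * chi \<mu> \<gamma>)"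
    by (rule Gmat_chi_expansion[OF assms(1)]) blast
  have "mpeval (chi \<mu> \<gamma>) (z(i := t)) = mpeval (chi \<mu> \<gamma>) z" if "\<gamma> \<in> \<Gamma>" for \<gamma>
    using \<Gamma>(3)[OF that] assms(2) unfolding mpeval_chi by (intro prod.cong) auto
  then show ?thesis
    by (simp add: Gval_def G mpeval_sum mpeval_mult)
qed

lemma Ddiag_resample_invariant:
  assumes "i \<notin> keys \<alpha>"
  shows "Ddiag n \<mu> (z(i := t)) (I, \<alpha>, \<gamma>) = Ddiag n \<mu> z (I, \<alpha>, \<gamma>)"
  unfolding Ddiag_def using assms by (auto simp: in_keys_iff intro!: prod.cong arg_cong2[where f = "(*)"])

lemma Ddiag_diff_mult_Kker:
  assumes "a + b < k"
  shows "(Ddiag n \<mu> z r - Ddiag n \<mu> (z(i := t)) r) * Kker n dp \<mu> F k a b z (z(i := t)) r c = 0"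
proof -
  obtain I \<alpha>1 \<gamma>1 J \<alpha>2 \<gamma>2 where rc: "r = (I, \<alpha>1, \<gamma>1)" "c = (J, \<alpha>2, \<gamma>2)"
    by (cases r, cases c) auto
  show ?thesis
    using Gval_resample_invariant[OF assms, of i \<alpha>1 \<alpha>2 n dp \<mu> F z t I \<gamma>1 J \<gamma>2]
      Ddiag_resample_invariant[of i \<alpha>1 n \<mu> z t I \<gamma>1]
    by (cases "i \<in> keys \<alpha>1") (auto simp: rc Kker_eq[OF assms])
qed

lemma Kker_mult_Ddiag_diff:
  assumes "a + b < k"
  shows "Kker n dp \<mu> F k a b z (z(i := t)) r c * (Ddiag n \<mu> z c - Ddiag n \<mu> (z(i := t)) c) = 0"
proof -
  obtain I \<alpha>1 \<gamma>1 J \<alpha>2 \<gamma>2 where rc: "r = (I, \<alpha>1, \<gamma>1)" "c = (J, \<alpha>2, \<gamma>2)"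
    by (cases r, cases c) auto
  show ?thesis
    using Gval_resample_invariant[OF assms, of i \<alpha>1 \<alpha>2 n dp \<mu> F z t I \<gamma>1 J \<gamma>2]
      Ddiag_resample_invariant[of i \<alpha>2 n \<mu> z t J \<gamma>2]
    by (cases "i \<in> keys \<alpha>2") (auto simp: rc Kker_eq[OF assms])
qed

lemma mmult_diagmat_diff_left_eq_0:
  assumes "(d r - d' r) * B r c = 0"
  shows "mmult S (\<lambda>r s. diagmat d r s - diagmat d' r s) B r c = 0"
  unfolding mmult_def diagmat_def using assms by (intro sum.neutral) auto

lemma mmult_diagmat_diff_right_eq_0:
  assumes "A r c * (d c - d' c) = 0"
  shows "mmult S A (\<lambda>s c. diagmat d s c - diagmat d' s c) r c = 0"
  unfolding mmult_def diagmat_def using assms by (intro sum.neutral) auto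

theorem mainTheorem11:
  fixes n dp k a b :: nat
    and \<mu> :: "nat \<Rightarrow> real measure"
    and F :: "'i::finite \<Rightarrow> 'j::finite \<Rightarrow> mpoly"
  assumes n_pos: "0 < n"
    and prob: "\<And>i. i < n \<Longrightarrow> prob_space (\<mu> i)"
    and borel: "\<And>i. i < n \<Longrightarrow> sets (\<mu> i) = sets borel"
    and moments: "\<And>i m. i < n \<Longrightarrow> integrable (\<mu> i) (\<lambda>t. t ^ m)"
    and F_poly: "\<And>I J \<beta>. \<beta> \<in> Poly_Mapping.keys (F I J) \<Longrightarrow> Poly_Mapping.keys \<beta> \<subseteq> {..<n} \<and> mdeg \<beta> \<le> dp"
    and k_pos: "1 \<le> k"
    and abk: "a + b < k"
  defines "R \<equiv> (UNIV :: 'i set) \<times> Kset n dp"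
    and "C \<equiv> (UNIV :: 'j set) \<times> Kset n dp"
    and "G \<equiv> Gval n dp \<mu> F k a b"
    and "K \<equiv> Kker n dp \<mu> F k a b"
  shows
    \<comment> \<open>(0)\<close>
    "(\<forall>i<n. AE z in Zlaw n \<mu>. AE t in \<mu> i. \<forall>r\<in>R. \<forall>c\<in>C.
        K z (z(i := t)) r c = real n / real (k - a - b) * (G z r c - G (z(i := t)) r c))
     \<comment> \<open>(1)\<close>
     \<and> (\<forall>z z'. \<forall>r\<in>R. \<forall>c\<in>C. K z' z r c = - K z z' r c)
     \<comment> \<open>(2)\<close>
     \<and> (AE z in Zlaw n \<mu>. \<forall>r\<in>R. \<forall>c\<in>C.
        (1 / real n) * (\<Sum>i<n. \<integral>t. K z (z(i := t)) r c \<partial>(\<mu> i)) = G z r c)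
     \<comment> \<open>(3)\<close>
     \<and> (\<forall>i<n. AE z in Zlaw n \<mu>. AE t in \<mu> i. \<forall>r\<in>R. \<forall>c\<in>C.
        mmult R (\<lambda>r' s. diagmat (Ddiag n \<mu> z) r' s - diagmat (Ddiag n \<mu> (z(i := t))) r' s)
              (K z (z(i := t))) r c = 0
      \<and> mmult C (K z (z(i := t)))
              (\<lambda>s c'. diagmat (Ddiag n \<mu> z) s c' - diagmat (Ddiag n \<mu> (z(i := t))) s c') r c = 0)"
  unfolding K_def G_def
  by (intro conjI allI impI always_eventually ballI Kker_swap Kker_eq[OF abk]
      Kker_resample_average[OF n_pos prob moments abk]
      mmult_diagmat_diff_left_eq_0 mmult_diagmat_diff_right_eq_0
      Ddiag_diff_mult_Kker[OF abk] Kker_mult_Ddiag_diff[OF abk])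

end
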